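(* Let $\varphi$ be a timelike ruled surface of type $M^1_+$ in $\mathbb{R}^3_1$ and let the ruled surface $\varphi^*$ of type $M^2_+$ be a Mannheim offset of $\varphi$. Let $\varphi_{h^*}$ and $\varphi_{a^*}$ be the trajectory ruled surfaces generated by the vectors $\vec h^*$ and $\vec a^*$ of $\varphi^*$. Then (a) $\varphi_{h^*}$ is a Bertrand offset of $\varphi$; (b) $\varphi_{a^*}$ is a Mannheim offset of $\varphi$.
   Context: Work in Minkowski 3-space $\mathbb{R}^3_1$ with $\langle x,y\rangle=-x_1y_1+x_2y_2+x_3y_3$, $\|x\|=\sqrt{|\langle x,x\rangle|}$, and Lorentzian cross product $x\times y=(x_2y_3-x_3y_2,\,x_1y_3-x_3y_1,\,x_2y_1-x_1y_2)$. A ruled surface is $\varphi(s,v)=\vec c(s)+v\vec q(s)$ with $\vec q$ a unit non-null vector field, $d\vec q/ds$ non-null, and $\vec c$ the striction curve ($\langle d\vec q/ds,d\vec c/ds\rangle=0$). Its Frenet frame $\{\vec q,\vec h,\vec a\}$ has central normal $\vec h=\frac{d\vec q/ds}{\|d\vec q/ds\|}$ and asymptotic normal $\vec a=\frac{(d\vec q/ds)\times\vec q}{\|d\vec q/ds\|}$. Type $M^1_+$: $\vec q$ and $\vec h$ spacelike (a timelike surface); type $M^2_+$: $\vec h$ timelike, $\vec q$ and $d\vec q/ds$ spacelike (a spacelike surface). A ruled surface $\varphi^*(s,v)=\vec c^*(s)+v\vec q^*(s)$ with Frenet frame $\{\vec q^*,\vec h^*,\vec a^*\}$ is a Mannheim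 offset of a ruled surface $\varphi$ if there is a one-to-one correspondence between their rulings such that the asymptotic normal of $\varphi$ is (up to sign) the central normal of $\varphi^*$, i.e. $\vec h^*=\vec a$; it is a Bertrand offset of $\varphi$ if there is a one-to-one correspondence between their rulings such that their central normals coincide (up to sign). Here $\vec c^*=\vec c+R\vec a$ and, with $\theta$ the angle between $\vec q$ and $\vec q^*$, $\vec q^*=\cos\theta\,\vec q+\sin\theta\,\vec h$, $\vec a^*=\sin\theta\,\vec q-\cos\theta\,\vec h$. The trajectory ruled surfaces are $\varphi_{h^*}(s,v)=\vec c^*(s)+v\vec h^*(s)$ and $\varphi_{a^*}(s,v)=\vec c^*(s)+v\vec a^*(s)$. *)

theory Defs
  imports "HOL-Analysis.Analysis"
begin

definition linner :: "real^3 \<Rightarrow> real^3 \<Rightarrow> real" where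
  "linner x y = - x$1 * y$1 + x$2 * y$2 + x$3 * y$3"

definition lnorm :: "real^3 \<Rightarrow> real" where
  "lnorm x = sqrt \<bar>linner x x\<bar>"

definition lcross :: "real^3 \<Rightarrow> real^3 \<Rightarrow> real^3" where
  "lcross x y = vector [x$2 * y$3 - x$3 * y$2, x$1 * y$3 - x$3 * y$1, x$2 * y$1 - x$1 * y$2]"

definition spacelike :: "real^3 \<Rightarrow> bool" where
  "spacelike x \<longleftrightarrow> linner x x > 0"

definition timelike :: "real^3 \<Rightarrow> bool" where
  "timelike x \<longleftrightarrow> linner x x < 0"

definition non_null :: "real^3 \<Rightarrow> bool" where
  "non_null x \<longleftrightarrow> linner x x \<noteq> 0"

definition D :: "(real \<Rightarrow> real^3) \<Rightarrow> real \<Rightarrow> real^3" where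
  "D f s = vector_derivative f (at s)"

text \<open>Central normal h = q'/||q'|| and asymptotic normal a = (q' x q)/||q'||
  of the ruled surface with ruling field q.\<close>
definition central_normal :: "(real \<Rightarrow> real^3) \<Rightarrow> real \<Rightarrow> real^3" where
  "central_normal q s = (1 / lnorm (D q s)) *\<^sub>R D q s"

definition asymptotic_normal :: "(real \<Rightarrow> real^3) \<Rightarrow> real \<Rightarrow> real^3" where
  "asymptotic_normal q s = (1 / lnorm (D q s)) *\<^sub>R lcross (D q s) (q s)"

text \<open>phi(s,v) = c(s) + v q(s), s in the open parameter set I, is a ruled surface:
  q unit non-null, q' non-null, c the striction curve (<q',c'> = 0);
  q is C^2-type differentiable (twice differentiable), c differentiable.\<close>
definition ruled_surface :: "real set \<Rightarrow> (real \<Rightarrow> real^3) \<Rightarrow> (real \<Rightarrow> real^3) \<Rightarrow> bool" where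
  "ruled_surface I c q \<longleftrightarrow> open I \<and>
     (\<forall>s\<in>I. q differentiable (at s) \<and> (D q) differentiable (at s) \<and> c differentiable (at s) \<and>
        \<bar>linner (q s) (q s)\<bar> = 1 \<and> non_null (D q s) \<and> linner (D q s) (D c s) = 0)"

definition type_M1_plus :: "real set \<Rightarrow> (real \<Rightarrow> real^3) \<Rightarrow> (real \<Rightarrow> real^3) \<Rightarrow> bool" where
  "type_M1_plus I c q \<longleftrightarrow> ruled_surface I c q \<and>
     (\<forall>s\<in>I. spacelike (q s) \<and> spacelike (central_normal q s))"

definition type_M2_plus :: "real set \<Rightarrow> (real \<Rightarrow> real^3) \<Rightarrow> (real \<Rightarrow> real^3) \<Rightarrow> bool" where
  "type_M2_plus I c q \<longleftrightarrow> ruled_surface I c q \<and>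
     (\<forall>s\<in>I. spacelike (q s) \<and> timelike (central_normal q s))"

text \<open>Offsets, with the correspondence of rulings s <-> s.\<close>
definition mannheim_offset :: "real set \<Rightarrow> (real \<Rightarrow> real^3) \<Rightarrow> (real \<Rightarrow> real^3) \<Rightarrow> bool" where
  "mannheim_offset I q1 q2 \<longleftrightarrow>
     (\<forall>s\<in>I. central_normal q2 s = asymptotic_normal q1 s \<or> central_normal q2 s = - asymptotic_normal q1 s)"

definition bertrand_offset :: "real set \<Rightarrow> (real \<Rightarrow> real^3) \<Rightarrow> (real \<Rightarrow> real^3) \<Rightarrow> bool" where
  "bertrand_offset I q1 q2 \<longleftrightarrow>
     (\<forall>s\<in>I. central_normal q2 s = central_normal q1 s \<or> central_normal q2 s = - central_normal q1 s)"

text \<open>A trajectory ruled surface c*(s) + v r(s) is a genuine ruled surface direction-wise: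
  r differentiable with non-null derivative (r is automatically unit non-null here).\<close>
definition trajectory_ruled :: "real set \<Rightarrow> (real \<Rightarrow> real^3) \<Rightarrow> bool" where
  "trajectory_ruled I r \<longleftrightarrow> (\<forall>s\<in>I. r differentiable (at s) \<and> non_null (D r s))"

end

theory Submission
  imports Defs
begin

text \<open>Let r be a vector field of constant
  non-zero square that is Lorentz-orthogonal to a ruling field q and to its derivative
  q'.  Differentiating r\<cdot>r = const and r\<cdot>q = 0 shows that r' is orthogonal to r and
  q, so r' is parallel to the third vector of any orthonormal frame containing q and r,
  and the central normal of r is that vector up to sign.  For r = h* the frame is
  {q, h*, h}, because h* = \<plusminus>a is orthogonal to q and q'; this gives the Bertrand
  offset.  For r = a* the frame is {q*, a*, h*}, so the central normal of a* is
  \<plusminus>h* = \<plusminus>a, the Mannheim offset.  Only the ruling fields enter.\<close>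

lemma linner_commute: "linner x y = linner y x"
  by (simp add: linner_def mult.commute)

lemma linner_zero_left [simp]: "linner 0 y = 0"
  and linner_zero_right [simp]: "linner x 0 = 0"
  and linner_scaleR_left: "linner (a *\<^sub>R x) y = a * linner x y"
  and linner_scaleR_right: "linner x (a *\<^sub>R y) = a * linner x y"
  and linner_minus_left: "linner (- x) y = - linner x y"
  and linner_minus_right: "linner x (- y) = - linner x y"
  by (simp_all add: linner_def algebra_simps)

lemma linner_lcross_left: "linner (lcross x y) x = 0"
  and linner_lcross_right: "linner (lcross x y) y = 0"
  by (simp_all add: linner_def lcross_def algebra_simps)

lemma linner_lcross_self:
  "linner (lcross x y) (lcross x y) = (linner x y)\<^sup>2 - linner x x * linner y y"
  by (simp add: linner_def lcross_def power2_eq_square algebra_simps)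

lemma lorentz_orthogonal_imp_parallel_lcross:
  assumes "linner x u = 0" "linner x w = 0" "lcross u w \<noteq> 0"
  shows "\<exists>m. x = m *\<^sub>R lcross u w"
proof -
  let ?c = "lcross u w"
  have "?c \<bullet> ?c \<noteq> 0"
    using assms(3) by simp
  then have "x = inverse (?c \<bullet> ?c) *\<^sub>R ((?c \<bullet> ?c) *\<^sub>R x)"
    by simp
  also have "(?c \<bullet> ?c) *\<^sub>R x = (?c \<bullet> x) *\<^sub>R ?c"
    using assms(1,2) unfolding linner_def lcross_def inner_vec_def sum_3 vec_eq_iff forall_3
    by (simp add: vector_def) algebra
  finally show ?thesis
    by (metis scaleR_scaleR)
qed

lemma lorentz_orthogonal_pair_parallel:
  assumes "linner x u = 0" "linner x w = 0" "linner h u = 0" "linner h w = 0"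
    and "lcross u w \<noteq> 0" "h \<noteq> 0"
  shows "\<exists>m. x = m *\<^sub>R h"
proof -
  obtain \<alpha> \<beta> where x: "x = \<alpha> *\<^sub>R lcross u w" and h: "h = \<beta> *\<^sub>R lcross u w"
    using lorentz_orthogonal_imp_parallel_lcross assms(1-5) by metis
  have "\<beta> \<noteq> 0"
    using h assms(6) by auto
  then have "x = (\<alpha> / \<beta>) *\<^sub>R h"
    by (simp add: x h)
  then show ?thesis ..
qed

lemma has_real_derivative_linner:
  assumes "f differentiable (at s)" "g differentiable (at s)"
  shows "((\<lambda>t. linner (f t) (g t)) has_real_derivative
           linner (D f s) (g s) + linner (f s) (D g s)) (at s)"
proof -
  have component: "((\<lambda>t. f t $ i) has_real_derivative D f s $ i) (at s)"
    if "f differentiable (at s)" for f :: "real \<Rightarrow> real^3" and i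
  proof -
    have "(f has_vector_derivative D f s) (at s)"
      using that by (simp add: D_def vector_derivative_works)
    from bounded_linear.has_vector_derivative[OF bounded_linear_vec_nth this, of i]
    show ?thesis
      by (simp add: has_real_derivative_iff_has_vector_derivative)
  qed
  have product: "((\<lambda>t. f t $ i * g t $ i) has_real_derivative
                   D f s $ i * g s $ i + f s $ i * D g s $ i) (at s)" for i
    using DERIV_mult[OF component[OF assms(1)] component[OF assms(2)], of i i]
    by (simp add: algebra_simps)
  show ?thesis
    unfolding linner_def
    using DERIV_add[OF DERIV_add[OF DERIV_minus[OF product[of 1]] product[of 2]] product[of 3]]
    by (simp add: algebra_simps)
qed

lemma linner_D_sum_eq_0_if_const:
  assumes "open I" "s \<in> I" "f differentiable (at s)" "g differentiable (at s)"
    and "\<forall>t\<in>I. linner (f t) (g t) = k"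
  shows "linner (D f s) (g s) + linner (f s) (D g s) = 0"
proof -
  have "((\<lambda>t. linner (f t) (g t)) has_real_derivative 0) (at s)"
    by (rule has_field_derivative_transform_within_open[of "\<lambda>_. k" 0 s I]) (use assms in auto)
  with has_real_derivative_linner[OF assms(3,4)] show ?thesis
    using DERIV_unique by blast
qed

lemma linner_D_self_eq_0_if_const:
  assumes "open I" "s \<in> I" "f differentiable (at s)" "\<forall>t\<in>I. linner (f t) (f t) = k"
  shows "linner (D f s) (f s) = 0"
  using linner_D_sum_eq_0_if_const[OF assms(1,2,3,3,4)] by (simp add: linner_commute)

lemma linner_central_normal_self:
  assumes "non_null (D q s)"
  shows "linner (central_normal q s) (central_normal q s) = sgn (linner (D q s) (D q s))"
proof -
  let ?Q = "linner (D q s) (D q s)"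
  have "lnorm (D q s) * lnorm (D q s) = \<bar>?Q\<bar>" "lnorm (D q s) > 0"
    using assms by (simp_all add: lnorm_def non_null_def)
  then show ?thesis
    unfolding central_normal_def linner_scaleR_left linner_scaleR_right
    by (simp add: field_simps sgn_if)
qed

lemma linner_asymptotic_normal_self:
  assumes "non_null (D q s)" "linner (q s) (q s) = 1" "linner (D q s) (q s) = 0"
  shows "linner (asymptotic_normal q s) (asymptotic_normal q s) = - sgn (linner (D q s) (D q s))"
proof -
  let ?Q = "linner (D q s) (D q s)"
  have "lnorm (D q s) * lnorm (D q s) = \<bar>?Q\<bar>" "lnorm (D q s) > 0"
    using assms(1) by (simp_all add: lnorm_def non_null_def)
  then show ?thesis
    unfolding asymptotic_normal_def linner_scaleR_left linner_scaleR_right linner_lcross_self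
    using assms(2,3) by (simp add: field_simps sgn_if)
qed

lemma linner_central_normal_ruling:
  "linner (D q s) (q s) = 0 \<Longrightarrow> linner (central_normal q s) (q s) = 0"
  by (simp add: central_normal_def linner_scaleR_left)

lemma linner_asymptotic_normal_ruling: "linner (asymptotic_normal q s) (q s) = 0"
  and linner_asymptotic_normal_D: "linner (asymptotic_normal q s) (D q s) = 0"
  and linner_asymptotic_normal_central_normal:
    "linner (asymptotic_normal q s) (central_normal q s) = 0"
  by (simp_all add: asymptotic_normal_def central_normal_def linner_scaleR_left
      linner_scaleR_right linner_lcross_left linner_lcross_right)

lemma central_normal_eq_pm_if_D_parallel:
  assumes "non_null (D r s)" "D r s = m *\<^sub>R h" "\<bar>linner h h\<bar> = 1"
  shows "central_normal r s = h \<or> central_normal r s = - h"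
proof -
  have "lnorm (D r s) = \<bar>m\<bar>"
    using assms(2,3) by (simp add: lnorm_def linner_scaleR_left linner_scaleR_right abs_mult)
  moreover have "m \<noteq> 0"
    using assms(1,2) by (auto simp: non_null_def)
  ultimately show ?thesis
    using assms(2) by (cases "m > 0") (auto simp: central_normal_def)
qed

lemma central_normal_of_field_orthogonal_to_ruling:
  assumes "open I" "s \<in> I" "r differentiable (at s)" "q differentiable (at s)"
    and "non_null (D r s)"
    and r_const: "\<forall>t\<in>I. linner (r t) (r t) = k" "k \<noteq> 0"
    and r_q: "\<forall>t\<in>I. linner (r t) (q t) = 0" and r_Dq: "linner (r s) (D q s) = 0"
    and q: "non_null (q s)"
    and h: "linner h (q s) = 0" "linner h (r s) = 0" "\<bar>linner h h\<bar> = 1"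
  shows "central_normal r s = h \<or> central_normal r s = - h"
proof -
  have "linner (D r s) (q s) = 0"
    using linner_D_sum_eq_0_if_const[OF assms(1-4) r_q] r_Dq by simp
  moreover have "linner (D r s) (r s) = 0"
    using linner_D_self_eq_0_if_const[OF assms(1-3) r_const(1)] .
  moreover have "lcross (q s) (r s) \<noteq> 0"
  proof
    assume "lcross (q s) (r s) = 0"
    then have "linner (q s) (q s) * k = 0"
      using linner_lcross_self[of "q s" "r s"] r_q r_const \<open>s \<in> I\<close> by (simp add: linner_commute)
    with q r_const(2) show False
      by (simp add: non_null_def)
  qed
  moreover have "h \<noteq> 0"
    using h(3) by (auto simp: linner_def)
  ultimately obtain m where "D r s = m *\<^sub>R h"
    using lorentz_orthogonal_pair_parallel h(1,2) by metis
  then show ?thesis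
    using central_normal_eq_pm_if_D_parallel assms(5) h(3) by blast
qed

lemma ruled_surface_spacelike_frame:
  assumes "ruled_surface I c q" "\<forall>t\<in>I. spacelike (q t)"
  shows "\<forall>t\<in>I. linner (q t) (q t) = 1"
    and "s \<in> I \<Longrightarrow> linner (D q s) (q s) = 0"
    and "s \<in> I \<Longrightarrow> \<bar>linner (central_normal q s) (central_normal q s)\<bar> = 1"
proof -
  show unit: "\<forall>t\<in>I. linner (q t) (q t) = 1"
    using assms unfolding ruled_surface_def spacelike_def by fastforce
  assume "s \<in> I"
  then show "linner (D q s) (q s) = 0"
    using linner_D_self_eq_0_if_const[OF _ _ _ unit] assms(1) by (auto simp: ruled_surface_def)
  show "\<bar>linner (central_normal q s) (central_normal q s)\<bar> = 1"
    using linner_central_normal_self assms(1) \<open>s \<in> I\<close>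
    by (auto simp: ruled_surface_def non_null_def sgn_if)
qed

lemma type_M2_plus_frame:
  assumes "type_M2_plus I c q" "s \<in> I"
  shows "linner (central_normal q s) (central_normal q s) = -1"
    and "linner (asymptotic_normal q s) (asymptotic_normal q s) = 1"
proof -
  have rs: "ruled_surface I c q" "\<forall>t\<in>I. spacelike (q t)"
    using assms(1) by (auto simp: type_M2_plus_def)
  have nn: "non_null (D q s)"
    using rs(1) assms(2) by (auto simp: ruled_surface_def)
  have "timelike (central_normal q s)"
    using assms by (auto simp: type_M2_plus_def)
  then have "sgn (linner (D q s) (D q s)) = -1"
    using linner_central_normal_self[OF nn] by (auto simp: timelike_def sgn_if split: if_splits)
  then show "linner (central_normal q s) (central_normal q s) = -1"
    and "linner (asymptotic_normal q s) (asymptotic_normal q s) = 1"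
    using linner_central_normal_self[OF nn] linner_asymptotic_normal_self[OF nn]
      ruled_surface_spacelike_frame[OF rs] assms(2) by auto
qed

theorem corollary6p3:
  fixes I :: "real set" and c q cs qs :: "real \<Rightarrow> real^3" and R :: "real \<Rightarrow> real"
  assumes phi: "type_M1_plus I c q"
    and phis: "type_M2_plus I cs qs"
    and mann: "mannheim_offset I q qs"
    and base: "\<forall>s\<in>I. cs s = c s + R s *\<^sub>R asymptotic_normal q s"
    and traj_h: "trajectory_ruled I (central_normal qs)"
    and traj_a: "trajectory_ruled I (asymptotic_normal qs)"
  shows "bertrand_offset I q (central_normal qs) \<and> mannheim_offset I q (asymptotic_normal qs)"
proof -
  have rs: "ruled_surface I c q" "\<forall>t\<in>I. spacelike (q t)"
    using phi by (auto simp: type_M1_plus_def)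
  have rss: "ruled_surface I cs qs" "\<forall>t\<in>I. spacelike (qs t)"
    using phis by (auto simp: type_M2_plus_def)
  note frame = ruled_surface_spacelike_frame[OF rs]
    and frame' = ruled_surface_spacelike_frame[OF rss]
    and frame'' = type_M2_plus_frame[OF phis]
  have I: "open I" and dq: "q differentiable (at s)" "qs differentiable (at s)" if "s \<in> I" for s
    using rs(1) rss(1) that by (auto simp: ruled_surface_def)
  have hs: "central_normal qs t = asymptotic_normal q t \<or> central_normal qs t = - asymptotic_normal q t"
    if "t \<in> I" for t
    using mann that by (auto simp: mannheim_offset_def)
  have hs_q: "\<forall>t\<in>I. linner (central_normal qs t) (q t) = 0"
    and hs_Dq: "linner (central_normal qs s) (D q s) = 0"
    and hs_h: "linner (central_normal q s) (central_normal qs s) = 0" if "s \<in> I" for s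
    using hs that linner_asymptotic_normal_ruling linner_asymptotic_normal_D
      linner_asymptotic_normal_central_normal
    by (fastforce simp: linner_minus_left linner_minus_right linner_commute)+
  have "central_normal (central_normal qs) s = central_normal q s \<or>
        central_normal (central_normal qs) s = - central_normal q s" if "s \<in> I" for s
    using traj_h that frame frame''(1) hs_q hs_Dq hs_h linner_central_normal_ruling
    by (intro central_normal_of_field_orthogonal_to_ruling[OF I that _ dq(1)[OF that], where k = "-1"])
       (auto simp: trajectory_ruled_def non_null_def)
  moreover have "central_normal (asymptotic_normal qs) s = central_normal qs s \<or>
        central_normal (asymptotic_normal qs) s = - central_normal qs s" if "s \<in> I" for s
    using traj_a that frame' frame''(2) linner_central_normal_ruling
      linner_asymptotic_normal_ruling linner_asymptotic_normal_D
      linner_asymptotic_normal_central_normal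
    by (intro central_normal_of_field_orthogonal_to_ruling[OF I that _ dq(2)[OF that], where k = 1])
       (auto simp: trajectory_ruled_def non_null_def linner_commute)
  ultimately show ?thesis
    unfolding bertrand_offset_def mannheim_offset_def using hs by (metis minus_minus)
qed

end
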